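(* Let $L_0$ be shared between frames $\mathcal{F}_1,\mathcal{F}_2$. Let $\mathcal{B}_{lc}\in\mathrm{lruns}_{\mathrm{LEFT}_0\cup C_{cut,0}}(\mathcal{F}_1)$ and $\mathcal{B}_{rc}\in\mathrm{lruns}_{\mathrm{RIGHT}_2\cup C_{cut,0}}(\mathcal{F}_2)$ satisfy $\mathcal{B}_{lc}|_{C_{cut,0}}=\mathcal{B}_{rc}|_{C_{cut,0}}$. Then there is an $\mathcal{A}\in\mathrm{exec}(\mathcal{F}_2)$ such that $\mathcal{B}_{lc}=\mathcal{A}|_{\mathrm{LEFT}_0\cup C_{cut,0}}$ and $\mathcal{B}_{rc}=\mathcal{A}|_{\mathrm{RIGHT}_2\cup C_{cut,0}}$.
   Context: A frame consists of pairwise disjoint sets of locations $\mathcal{LO}$, channels $\mathcal{CH}$, data $\mathcal{D}$. Each channel $c$ either has both a sender $\mathrm{sender}(c)$ and a recipient $\mathrm{recipient}(c)$ (possibly equal), or neither; $\mathrm{chans}(\ell)$ is the set of channels of which $\ell$ is sender or recipient. Each location $\ell$ has a prefix-closed set $\mathrm{traces}(\ell)$ of finite or infinite sequences of labels $(c,v)$, $c\in\mathrm{chans}(\ell)$, $v\in\mathcal{D}$. Events are drawn from a common set $E$ with functions $\mathrm{chan}$ and $\mathrm{msg}$. A system of events $(B,\preceq)$ has $B\subseteq E$ and $\preceq$ a partial order with finitely many predecessors per event; it is an execution of frame $\mathcal{F}_i$ ($\in\mathrm{exec}(\mathcal{F}_i)$) iff for each location $\ell$ of $\mathcal{F}_i$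 the events whose channel has $\ell$ as sender or recipient are linearly ordered and, as a sequence of labels $(\mathrm{chan}(e),\mathrm{msg}(e))$, lie in $\mathrm{traces}(\ell)$. $\mathcal{B}|_C$ keeps events with channel in $C$ and the restricted order; $\mathrm{lruns}_C(\mathcal{F}_i)=\{\mathcal{A}|_C:\mathcal{A}\in\mathrm{exec}(\mathcal{F}_i)\}$. A set $L_0$ of locations is shared between $\mathcal{F}_1$ and $\mathcal{F}_2$ (with locations $\mathcal{LO}_i$, channels $\mathcal{CH}_i$) iff $L_0\subseteq\mathcal{LO}_1\cap\mathcal{LO}_2$ and each $\ell\in L_0$ has the same channel endpoints and the same trace set in both frames. Then $\mathrm{LEFT}_0=\{c\in\mathcal{CH}_1:$ both endpoints of $c$ are in $L_0\}$, $C_{cut,0}=\{c\in\mathcal{CH}_1:$ exactly one endpoint of $c$ is in $L_0\}$, and $\mathrm{RIGHT}_2=\{c\in\mathcal{CH}_2:$ no endpoint of $c$ is in $L_0\}$. *)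

theory Defs
  imports Main
begin

text \<open>A (finite or infinite) sequence over 'a is a partial map from nat whose
domain is an initial segment of nat (possibly all of nat).\<close>
type_synonym 'a seq = "nat \<Rightarrow> 'a option"

definition is_seq :: "'a seq \<Rightarrow> bool" where
  "is_seq s \<longleftrightarrow> (\<forall>n m. m \<le> n \<longrightarrow> s n \<noteq> None \<longrightarrow> s m \<noteq> None)"

text \<open>The prefix of length k (every prefix of s is either s itself or such a truncation).\<close>
definition truncate :: "'a seq \<Rightarrow> nat \<Rightarrow> 'a seq" where
  "truncate s k = (\<lambda>n. if n < k then s n else None)"

definition prefix_closed :: "'a seq set \<Rightarrow> bool" where
  "prefix_closed S \<longleftrightarrow> (\<forall>s\<in>S. \<forall>k. truncate s k \<in> S)"

text \<open>Locations, channels and data live in distinct types, hence are pairwise disjoint.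
A channel has either both a sender and a recipient, or neither.\<close>
record ('l, 'c, 'd) frame =
  LO :: "'l set"
  CH :: "'c set"
  Dat :: "'d set"
  sender :: "'c \<Rightarrow> 'l option"
  recipient :: "'c \<Rightarrow> 'l option"
  traces :: "'l \<Rightarrow> ('c \<times> 'd) seq set"

definition chans :: "('l, 'c, 'd) frame \<Rightarrow> 'l \<Rightarrow> 'c set" where
  "chans F l = {c \<in> CH F. sender F c = Some l \<or> recipient F c = Some l}"

definition frame :: "('l, 'c, 'd) frame \<Rightarrow> bool" where
  "frame F \<longleftrightarrow>
     (\<forall>c. c \<notin> CH F \<longrightarrow> sender F c = None \<and> recipient F c = None) \<and>
     (\<forall>c\<in>CH F. (sender F c = None) \<longleftrightarrow> (recipient F c = None)) \<and>
     (\<forall>c\<in>CH F. \<forall>l. sender F c = Some l \<longrightarrow> l \<in> LO F) \<and>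
     (\<forall>c\<in>CH F. \<forall>l. recipient F c = Some l \<longrightarrow> l \<in> LO F) \<and>
     (\<forall>l\<in>LO F. prefix_closed (traces F l) \<and>
        (\<forall>s\<in>traces F l. is_seq s \<and>
           (\<forall>n c v. s n = Some (c, v) \<longrightarrow> c \<in> chans F l \<and> v \<in> Dat F)))"

text \<open>Events are elements of a type 'e with functions chan and msg.
A system of events is a pair (B, R), R a partial order on B with finitely many
predecessors per event.\<close>
type_synonym 'e sysev = "'e set \<times> ('e \<times> 'e) set"

definition sys_events :: "'e sysev \<Rightarrow> bool" where
  "sys_events BR \<longleftrightarrow> (case BR of (B, R) \<Rightarrow>
     partial_order_on B R \<and> (\<forall>e\<in>B. finite {e'. (e', e) \<in> R}))"

definition loc_events :: "('e \<Rightarrow> 'c) \<Rightarrow> ('l, 'c, 'd) frame \<Rightarrow> 'e set \<Rightarrow> 'l \<Rightarrow> 'e set" where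
  "loc_events chan F B l = {e \<in> B. chan e \<in> chans F l}"

definition enumerates :: "('e \<Rightarrow> 'c) \<Rightarrow> ('e \<Rightarrow> 'd) \<Rightarrow> 'e set \<Rightarrow> ('e \<times> 'e) set
    \<Rightarrow> ('c \<times> 'd) seq \<Rightarrow> bool" where
  "enumerates chan msg Eb R s \<longleftrightarrow>
     (\<exists>f :: nat \<Rightarrow> 'e. bij_betw f {n. s n \<noteq> None} Eb \<and>
        (\<forall>n m. s n \<noteq> None \<longrightarrow> s m \<noteq> None \<longrightarrow> (n \<le> m \<longleftrightarrow> (f n, f m) \<in> R)) \<and>
        (\<forall>n. s n \<noteq> None \<longrightarrow> s n = Some (chan (f n), msg (f n))))"

definition exec :: "('e \<Rightarrow> 'c) \<Rightarrow> ('e \<Rightarrow> 'd) \<Rightarrow> ('l, 'c, 'd) frame \<Rightarrow> 'e sysev set" where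
  "exec chan msg F = {(B, R). sys_events (B, R) \<and>
     (\<forall>l\<in>LO F. total_on (loc_events chan F B l) R \<and>
        (\<exists>s\<in>traces F l. enumerates chan msg (loc_events chan F B l) R s))}"

definition restr :: "('e \<Rightarrow> 'c) \<Rightarrow> 'e sysev \<Rightarrow> 'c set \<Rightarrow> 'e sysev" where
  "restr chan BR C = (case BR of (B, R) \<Rightarrow>
     ({e \<in> B. chan e \<in> C}, R \<inter> ({e \<in> B. chan e \<in> C} \<times> {e \<in> B. chan e \<in> C})))"

definition lruns :: "('e \<Rightarrow> 'c) \<Rightarrow> ('e \<Rightarrow> 'd) \<Rightarrow> 'c set \<Rightarrow> ('l, 'c, 'd) frame \<Rightarrow> 'e sysev set" where
  "lruns chan msg C F = {restr chan A C | A. A \<in> exec chan msg F}"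

definition shared :: "'l set \<Rightarrow> ('l, 'c, 'd) frame \<Rightarrow> ('l, 'c, 'd) frame \<Rightarrow> bool" where
  "shared L0 F1 F2 \<longleftrightarrow> L0 \<subseteq> LO F1 \<inter> LO F2 \<and>
     (\<forall>l\<in>L0. chans F1 l = chans F2 l \<and>
        (\<forall>c\<in>chans F1 l. sender F1 c = sender F2 c \<and> recipient F1 c = recipient F2 c) \<and>
        traces F1 l = traces F2 l)"

definition in_L :: "'l set \<Rightarrow> 'l option \<Rightarrow> bool" where
  "in_L L x \<longleftrightarrow> (\<exists>l\<in>L. x = Some l)"

definition LEFT0 :: "'l set \<Rightarrow> ('l, 'c, 'd) frame \<Rightarrow> 'c set" where
  "LEFT0 L0 F1 = {c \<in> CH F1. in_L L0 (sender F1 c) \<and> in_L L0 (recipient F1 c)}"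

definition Ccut0 :: "'l set \<Rightarrow> ('l, 'c, 'd) frame \<Rightarrow> 'c set" where
  "Ccut0 L0 F1 = {c \<in> CH F1. sender F1 c \<noteq> None \<and> recipient F1 c \<noteq> None \<and>
                    (in_L L0 (sender F1 c) \<noteq> in_L L0 (recipient F1 c))}"

definition RIGHT2 :: "'l set \<Rightarrow> ('l, 'c, 'd) frame \<Rightarrow> 'c set" where
  "RIGHT2 L0 F2 = {c \<in> CH F2. \<not> in_L L0 (sender F2 c) \<and> \<not> in_L L0 (recipient F2 c)}"

end

theory Submission
  imports Defs
begin

text \<open>The left run fixes the events and the order at the shared locations, the right run
those at the remaining locations, and the two runs overlap exactly in their events on cut
channels, where they agree. Gluing the two partial orders along this common part gives a
system of events whose restrictions are the two runs. Every location of the second frame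
sees all of its events inside one of the two runs: a shared location only uses channels of
the left part, where it behaves as in the first frame, and any other location only uses
channels of the right part. Hence the glued system is an execution of the second frame.\<close>

text \<open>For orders that are compatible on the overlap of their carriers, this is already the
transitive closure of the union: a longer alternating chain passes twice through the
overlap and can be shortened there.\<close>

definition glue :: "('a \<times> 'a) set \<Rightarrow> ('a \<times> 'a) set \<Rightarrow> ('a \<times> 'a) set" where
  "glue R1 R2 = R1 \<union> R2 \<union> R1 O R2 \<union> R2 O R1"

lemma glue_commute: "glue R1 R2 = glue R2 R1"
  unfolding glue_def by blast

lemma glue_Int_left:
  assumes "R1 \<subseteq> B1 \<times> B1" "trans R1" "R2 \<inter> B1 \<times> B1 \<subseteq> R1"
  shows "glue R1 R2 \<inter> B1 \<times> B1 = R1"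
  unfolding glue_def using assms(1,3) transD[OF assms(2)] by blast

lemma relcomp_through_compatible_subset:
  assumes "R1 \<subseteq> B1 \<times> B1" "trans R1" "R2 \<inter> B1 \<times> B1 \<subseteq> R1"
  shows "R1 O R2 O R1 \<subseteq> R1"
proof clarify
  fix a b c d assume ab: "(a, b) \<in> R1" and bc: "(b, c) \<in> R2" and cd: "(c, d) \<in> R1"
  have "(b, c) \<in> R1" using ab bc cd assms(1,3) by blast
  then show "(a, d) \<in> R1" using ab cd transD[OF assms(2)] by blast
qed

lemma partial_order_on_glue:
  assumes po1: "partial_order_on B1 R1" and po2: "partial_order_on B2 R2"
    and comp12: "R2 \<inter> B1 \<times> B1 \<subseteq> R1" and comp21: "R1 \<inter> B2 \<times> B2 \<subseteq> R2"
  shows "partial_order_on (B1 \<union> B2) (glue R1 R2)"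
proof -
  have s1: "R1 \<subseteq> B1 \<times> B1" and t1: "trans R1" and a1: "antisym R1" and r1: "refl_on B1 R1"
    using partial_order_onD[OF po1] by auto
  have s2: "R2 \<subseteq> B2 \<times> B2" and t2: "trans R2" and a2: "antisym R2" and r2: "refl_on B2 R2"
    using partial_order_onD[OF po2] by auto
  note R1_R2_R1 = relcomp_through_compatible_subset[OF s1 t1 comp12]
  note R2_R1_R2 = relcomp_through_compatible_subset[OF s2 t2 comp21]
  have trans: "trans (glue R1 R2)"
  proof (rule transI)
    fix x y z assume "(x, y) \<in> glue R1 R2" "(y, z) \<in> glue R1 R2"
    then show "(x, z) \<in> glue R1 R2"
      unfolding glue_def using transD[OF t1] transD[OF t2] R1_R2_R1 R2_R1_R2
      by (elim UnE relcompE) blast+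
  qed
  have antisym: "antisym (glue R1 R2)"
  proof (rule antisymI)
    fix x y assume xy: "(x, y) \<in> glue R1 R2" and yx: "(y, x) \<in> glue R1 R2"
    have both_B1: "x = y" if "x \<in> B1" "y \<in> B1"
      using glue_Int_left[OF s1 t1 comp12] antisymD[OF a1] xy yx that by blast
    have both_B2: "x = y" if "x \<in> B2" "y \<in> B2"
      using glue_Int_left[OF s2 t2 comp21] antisymD[OF a2] xy yx that
      unfolding glue_commute[of R2] by blast
    have across: "x = y" if x: "x \<in> B1" "x \<notin> B2" and y: "y \<in> B2" "y \<notin> B1"
      and xy: "(x, y) \<in> glue R1 R2" and yx: "(y, x) \<in> glue R1 R2" for x y
    proof -
      obtain b where b: "(x, b) \<in> R1" "(b, y) \<in> R2"
        using xy x y s1 s2 unfolding glue_def by blast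
      obtain b' where b': "(y, b') \<in> R2" "(b', x) \<in> R1"
        using yx x y s1 s2 unfolding glue_def by blast
      have "(b, b') \<in> R1"
        using comp12 transD[OF t2] b b' s1 by blast
      then have "(b, x) \<in> R1" using b' transD[OF t1] by blast
      then have "b = x" using antisymD[OF a1] b by blast
      then show ?thesis using b s2 x by blast
    qed
    have "x \<in> B1 \<union> B2" "y \<in> B1 \<union> B2"
      using xy s1 s2 unfolding glue_def by auto
    then show "x = y"
      using both_B1 both_B2 across[OF _ _ _ _ xy yx] across[OF _ _ _ _ yx xy] by blast
  qed
  have "glue R1 R2 \<subseteq> (B1 \<union> B2) \<times> (B1 \<union> B2)" "refl_on (B1 \<union> B2) (glue R1 R2)"
    using r1 r2 s1 s2 unfolding glue_def refl_on_def by blast+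
  then show ?thesis
    using trans antisym unfolding partial_order_on_def preorder_on_def by blast
qed

lemma finite_predecessors_glue:
  assumes "R1 \<subseteq> B1 \<times> B1" "R2 \<subseteq> B2 \<times> B2"
    and "\<forall>e\<in>B1. finite {e'. (e', e) \<in> R1}" "\<forall>e\<in>B2. finite {e'. (e', e) \<in> R2}"
  shows "finite {e'. (e', e) \<in> glue R1 R2}"
proof -
  have fin1: "finite {e'. (e', x) \<in> R1}" for x
    using assms(1,3) by (cases "x \<in> B1") (auto intro: rev_finite_subset[of "{}"])
  have fin2: "finite {e'. (e', x) \<in> R2}" for x
    using assms(2,4) by (cases "x \<in> B2") (auto intro: rev_finite_subset[of "{}"])
  have "{e'. (e', e) \<in> glue R1 R2} \<subseteq> {e'. (e', e) \<in> R1} \<union> {e'. (e', e) \<in> R2}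
      \<union> (\<Union>b\<in>{e'. (e', e) \<in> R2}. {e'. (e', b) \<in> R1})
      \<union> (\<Union>b\<in>{e'. (e', e) \<in> R1}. {e'. (e', b) \<in> R2})"
    unfolding glue_def by blast
  then show ?thesis
    by (rule finite_subset) (use fin1 fin2 in auto)
qed

lemma sys_events_restr:
  assumes "sys_events A"
  shows "sys_events (restr chan A C)"
proof -
  obtain B R where A: "A = (B, R)" by fastforce
  define B' where "B' = {e \<in> B. chan e \<in> C}"
  have po: "partial_order_on B R" and fin: "\<forall>e\<in>B. finite {e'. (e', e) \<in> R}"
    using assms unfolding A sys_events_def by auto
  have "partial_order_on B' (R \<inter> B' \<times> B')"
    using po unfolding B'_def partial_order_on_def preorder_on_def refl_on_def trans_def antisym_def
    by blast
  moreover have "finite {e'. (e', e) \<in> R \<inter> B' \<times> B'}" if "e \<in> B'" for e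
    using fin that unfolding B'_def by (auto elim: finite_subset[rotated])
  moreover have "restr chan A C = (B', R \<inter> B' \<times> B')"
    unfolding A restr_def B'_def by simp
  ultimately show ?thesis
    unfolding sys_events_def by simp
qed

lemma restr_glue:
  assumes se1: "sys_events (B1, R1)" and se2: "sys_events (B2, R2)"
    and ch1: "\<forall>e\<in>B1. chan e \<in> C1" and ch2: "\<forall>e\<in>B2. chan e \<in> C2"
    and agree: "restr chan (B1, R1) (C1 \<inter> C2) = restr chan (B2, R2) (C1 \<inter> C2)"
  shows "sys_events (B1 \<union> B2, glue R1 R2)"
    and "restr chan (B1 \<union> B2, glue R1 R2) C1 = (B1, R1)"
    and "restr chan (B1 \<union> B2, glue R1 R2) C2 = (B2, R2)"
proof -
  have po1: "partial_order_on B1 R1" and po2: "partial_order_on B2 R2"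
    and fin1: "\<forall>e\<in>B1. finite {e'. (e', e) \<in> R1}" and fin2: "\<forall>e\<in>B2. finite {e'. (e', e) \<in> R2}"
    using se1 se2 unfolding sys_events_def by auto
  have s1: "R1 \<subseteq> B1 \<times> B1" and t1: "trans R1" and s2: "R2 \<subseteq> B2 \<times> B2" and t2: "trans R2"
    using partial_order_onD[OF po1] partial_order_onD[OF po2] by auto
  define X1 X2 where "X1 = {e \<in> B1. chan e \<in> C1 \<inter> C2}" and "X2 = {e \<in> B2. chan e \<in> C1 \<inter> C2}"
  have "(X1, R1 \<inter> X1 \<times> X1) = (X2, R2 \<inter> X2 \<times> X2)"
    using agree unfolding restr_def X1_def X2_def prod.case .
  then have X: "X1 = X2" "R1 \<inter> X1 \<times> X1 = R2 \<inter> X2 \<times> X2"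
    by (metis prod.inject)+
  have overlap: "B1 \<inter> B2 = X1"
    using X(1) ch1 ch2 unfolding X1_def X2_def by blast
  have comp12: "R2 \<inter> B1 \<times> B1 \<subseteq> R1" and comp21: "R1 \<inter> B2 \<times> B2 \<subseteq> R2"
    using X s1 s2 overlap by blast+
  show "sys_events (B1 \<union> B2, glue R1 R2)"
    unfolding sys_events_def
    using partial_order_on_glue[OF po1 po2 comp12 comp21] finite_predecessors_glue[OF s1 s2 fin1 fin2]
    by simp
  have "{e \<in> B1 \<union> B2. chan e \<in> C1} = B1" "{e \<in> B1 \<union> B2. chan e \<in> C2} = B2"
    using overlap X(1) ch1 ch2 unfolding X1_def X2_def by blast+
  then show "restr chan (B1 \<union> B2, glue R1 R2) C1 = (B1, R1)"
    and "restr chan (B1 \<union> B2, glue R1 R2) C2 = (B2, R2)"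
    using glue_Int_left[OF s1 t1 comp12] glue_Int_left[OF s2 t2 comp21]
    unfolding restr_def glue_commute[of R2] by simp_all
qed

lemma restr_restr: "restr chan (restr chan A C) C' = restr chan A (C \<inter> C')"
  unfolding restr_def by (cases A) auto

lemma restr_channels: "restr chan A C = (B, R) \<Longrightarrow> \<forall>e\<in>B. chan e \<in> C"
  unfolding restr_def by (cases A) auto

lemma common_extension:
  assumes "sys_events A1" "sys_events A2"
    and "restr chan A1 (C1 \<inter> C2) = restr chan A2 (C1 \<inter> C2)"
  obtains A where "sys_events A" "restr chan A C1 = restr chan A1 C1"
    "restr chan A C2 = restr chan A2 C2"
proof -
  obtain B1 R1 B2 R2 where A1: "restr chan A1 C1 = (B1, R1)" and A2: "restr chan A2 C2 = (B2, R2)"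
    by fastforce
  have "sys_events (B1, R1)" "sys_events (B2, R2)"
    using assms(1,2) sys_events_restr unfolding A1[symmetric] A2[symmetric] by blast+
  moreover have "\<forall>e\<in>B1. chan e \<in> C1" "\<forall>e\<in>B2. chan e \<in> C2"
    using restr_channels[OF A1] restr_channels[OF A2] .
  moreover have "restr chan (B1, R1) (C1 \<inter> C2) = restr chan (B2, R2) (C1 \<inter> C2)"
    using assms(3) unfolding A1[symmetric] A2[symmetric] restr_restr by (simp add: Int_ac)
  ultimately have glued: "sys_events (B1 \<union> B2, glue R1 R2)"
    "restr chan (B1 \<union> B2, glue R1 R2) C1 = (B1, R1)" "restr chan (B1 \<union> B2, glue R1 R2) C2 = (B2, R2)"
    by (rule restr_glue)+
  show thesis
    by (rule that[OF glued(1)]) (simp_all add: glued A1 A2)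
qed

definition local_exec ::
    "('e \<Rightarrow> 'c) \<Rightarrow> ('e \<Rightarrow> 'd) \<Rightarrow> ('l, 'c, 'd) frame \<Rightarrow> 'l \<Rightarrow> 'e sysev \<Rightarrow> bool" where
  "local_exec chan msg F l A = (case A of (B, R) \<Rightarrow>
     total_on (loc_events chan F B l) R \<and>
     (\<exists>s\<in>traces F l. enumerates chan msg (loc_events chan F B l) R s))"

lemma exec_iff_local_exec:
  "A \<in> exec chan msg F \<longleftrightarrow> sys_events A \<and> (\<forall>l\<in>LO F. local_exec chan msg F l A)"
  unfolding exec_def local_exec_def by (cases A) auto

lemma local_exec_cong_frame:
  assumes "chans F l = chans F' l" "traces F l = traces F' l"
  shows "local_exec chan msg F l A \<longleftrightarrow> local_exec chan msg F' l A"
  using assms unfolding local_exec_def loc_events_def by simp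

lemma enumerates_cong:
  assumes "R \<inter> E \<times> E = R' \<inter> E \<times> E" "enumerates chan msg E R s"
  shows "enumerates chan msg E R' s"
proof -
  obtain f where f: "bij_betw f {n. s n \<noteq> None} E"
    "\<forall>n m. s n \<noteq> None \<longrightarrow> s m \<noteq> None \<longrightarrow> (n \<le> m \<longleftrightarrow> (f n, f m) \<in> R)"
    "\<forall>n. s n \<noteq> None \<longrightarrow> s n = Some (chan (f n), msg (f n))"
    using assms(2) unfolding enumerates_def by blast
  have "(f n, f m) \<in> R \<longleftrightarrow> (f n, f m) \<in> R'" if "s n \<noteq> None" "s m \<noteq> None" for n m
    using that assms(1) bij_betwE[OF f(1)] by blast
  then have "\<forall>n m. s n \<noteq> None \<longrightarrow> s m \<noteq> None \<longrightarrow> (n \<le> m \<longleftrightarrow> (f n, f m) \<in> R')"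
    using f(2) by blast
  then show ?thesis
    unfolding enumerates_def using f(1,3) by blast
qed

lemma local_exec_cong:
  assumes "loc_events chan F B l = E" "loc_events chan F B' l = E"
    and "R \<inter> E \<times> E = R' \<inter> E \<times> E"
  shows "local_exec chan msg F l (B, R) \<longleftrightarrow> local_exec chan msg F l (B', R')"
proof -
  have "total_on E R \<longleftrightarrow> total_on E R'"
    using assms(3) unfolding total_on_def by blast
  moreover have "enumerates chan msg E R s \<longleftrightarrow> enumerates chan msg E R' s" for s
    using enumerates_cong assms(3) by metis
  ultimately show ?thesis
    by (simp add: local_exec_def assms(1,2))
qed

lemma local_exec_restr_iff:
  assumes "chans F l \<subseteq> C"
  shows "local_exec chan msg F l (restr chan A C) \<longleftrightarrow> local_exec chan msg F l A"
proof -
  obtain B R where A: "A = (B, R)" by fastforce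
  define B' where "B' = {e \<in> B. chan e \<in> C}"
  have restr: "restr chan (B, R) C = (B', R \<inter> B' \<times> B')"
    unfolding restr_def B'_def by simp
  have E: "loc_events chan F B' l = loc_events chan F B l"
    using assms unfolding B'_def loc_events_def by auto
  moreover have "loc_events chan F B l \<subseteq> B'"
    using E unfolding loc_events_def by blast
  ultimately show ?thesis
    unfolding A restr by (intro local_exec_cong) blast+
qed

lemma local_exec_restr_eq:
  assumes "chans F l \<subseteq> C" "restr chan A C = restr chan A' C" "local_exec chan msg F l A'"
  shows "local_exec chan msg F l A"
  using assms local_exec_restr_iff by metis

lemma in_L_simps [simp]: "in_L L (Some l) \<longleftrightarrow> l \<in> L" "\<not> in_L L None"
  unfolding in_L_def by auto

lemma shared_chans_eq:
  assumes "shared L0 F1 F2" "l \<in> L0" "c \<in> chans F1 l"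
  shows "sender F1 c = sender F2 c" "recipient F1 c = recipient F2 c"
  using assms unfolding shared_def by auto

lemma chans_shared_subset:
  assumes "frame F1" "l \<in> L0"
  shows "chans F1 l \<subseteq> LEFT0 L0 F1 \<union> Ccut0 L0 F1"
proof
  fix c assume "c \<in> chans F1 l"
  then have c: "c \<in> CH F1" "sender F1 c = Some l \<or> recipient F1 c = Some l"
    unfolding chans_def by auto
  then have "sender F1 c \<noteq> None" "recipient F1 c \<noteq> None"
    using assms(1) unfolding frame_def by auto
  then show "c \<in> LEFT0 L0 F1 \<union> Ccut0 L0 F1"
    unfolding LEFT0_def Ccut0_def using c assms(2) by auto
qed

lemma chans_unshared_subset:
  assumes sh: "shared L0 F1 F2" and l: "l \<notin> L0"
  shows "chans F2 l \<subseteq> RIGHT2 L0 F2 \<union> Ccut0 L0 F1"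
proof
  fix c assume "c \<in> chans F2 l"
  then have c: "c \<in> CH F2" "sender F2 c = Some l \<or> recipient F2 c = Some l"
    unfolding chans_def by auto
  show "c \<in> RIGHT2 L0 F2 \<union> Ccut0 L0 F1"
  proof (cases "c \<in> RIGHT2 L0 F2")
    case False
    then obtain l' where l': "l' \<in> L0" "sender F2 c = Some l' \<or> recipient F2 c = Some l'"
      using c unfolding RIGHT2_def in_L_def by blast
    then have c1: "c \<in> chans F1 l'"
      using c sh unfolding shared_def chans_def by blast
    then have "(sender F1 c = Some l' \<and> recipient F1 c = Some l) \<or>
               (sender F1 c = Some l \<and> recipient F1 c = Some l')"
      using shared_chans_eq[OF sh l'(1) c1] c l l' by auto
    then show ?thesis
      using c1 l l' unfolding Ccut0_def chans_def by auto
  qed simp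
qed

lemma left_Int_right_eq_Ccut0:
  assumes "shared L0 F1 F2"
  shows "(LEFT0 L0 F1 \<union> Ccut0 L0 F1) \<inter> (RIGHT2 L0 F2 \<union> Ccut0 L0 F1) = Ccut0 L0 F1"
proof -
  have "c \<notin> RIGHT2 L0 F2" if left: "c \<in> LEFT0 L0 F1" for c
  proof -
    obtain l where l: "l \<in> L0" "sender F1 c = Some l" "c \<in> CH F1"
      using left unfolding LEFT0_def in_L_def by blast
    then have "c \<in> chans F1 l"
      unfolding chans_def by blast
    then have "sender F2 c = Some l"
      using shared_chans_eq(1)[OF assms l(1)] l(2) by simp
    then show ?thesis
      using l(1) unfolding RIGHT2_def by simp
  qed
  then show ?thesis by blast
qed

lemma lruns_restrE:
  assumes "B \<in> lruns chan msg C F"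
  obtains A where "A \<in> exec chan msg F" "B = restr chan A C"
  using assms unfolding lruns_def by blast

lemma local_exec_shared_location:
  assumes "frame F1" "shared L0 F1 F2" "l \<in> L0" "A1 \<in> exec chan msg F1"
    and "restr chan A (LEFT0 L0 F1 \<union> Ccut0 L0 F1) = restr chan A1 (LEFT0 L0 F1 \<union> Ccut0 L0 F1)"
  shows "local_exec chan msg F2 l A"
proof -
  have "chans F2 l = chans F1 l" "traces F2 l = traces F1 l" "l \<in> LO F1"
    using assms(2,3) unfolding shared_def by auto
  moreover have "local_exec chan msg F1 l A1"
    using assms(4) \<open>l \<in> LO F1\<close> unfolding exec_iff_local_exec by blast
  ultimately have "local_exec chan msg F2 l A1"
    using local_exec_cong_frame by metis
  then show ?thesis
    using chans_shared_subset[OF assms(1,3)] \<open>chans F2 l = chans F1 l\<close>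
    by (intro local_exec_restr_eq[OF _ assms(5)]) simp_all
qed

lemma local_exec_unshared_location:
  assumes "shared L0 F1 F2" "l \<in> LO F2" "l \<notin> L0" "A2 \<in> exec chan msg F2"
    and "restr chan A (RIGHT2 L0 F2 \<union> Ccut0 L0 F1) = restr chan A2 (RIGHT2 L0 F2 \<union> Ccut0 L0 F1)"
  shows "local_exec chan msg F2 l A"
proof (rule local_exec_restr_eq[OF _ assms(5)])
  show "chans F2 l \<subseteq> RIGHT2 L0 F2 \<union> Ccut0 L0 F1"
    using chans_unshared_subset[OF assms(1,3)] .
  show "local_exec chan msg F2 l A2"
    using assms(2,4) unfolding exec_iff_local_exec by blast
qed

theorem lemma11:
  fixes F1 F2 :: "('l, 'c, 'd) frame"
    and chan :: "'e \<Rightarrow> 'c" and msg :: "'e \<Rightarrow> 'd"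
    and L0 :: "'l set" and Blc Brc :: "'e sysev"
  assumes "frame F1" and "frame F2"
    and "shared L0 F1 F2"
    and "Blc \<in> lruns chan msg (LEFT0 L0 F1 \<union> Ccut0 L0 F1) F1"
    and "Brc \<in> lruns chan msg (RIGHT2 L0 F2 \<union> Ccut0 L0 F1) F2"
    and "restr chan Blc (Ccut0 L0 F1) = restr chan Brc (Ccut0 L0 F1)"
  shows "\<exists>A \<in> exec chan msg F2.
           Blc = restr chan A (LEFT0 L0 F1 \<union> Ccut0 L0 F1) \<and>
           Brc = restr chan A (RIGHT2 L0 F2 \<union> Ccut0 L0 F1)"
proof -
  define LC RC where "LC = LEFT0 L0 F1 \<union> Ccut0 L0 F1" and "RC = RIGHT2 L0 F2 \<union> Ccut0 L0 F1"
  from assms(4) obtain A1 where A1: "A1 \<in> exec chan msg F1" "Blc = restr chan A1 LC"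
    unfolding LC_def by (rule lruns_restrE)
  from assms(5) obtain A2 where A2: "A2 \<in> exec chan msg F2" "Brc = restr chan A2 RC"
    unfolding RC_def by (rule lruns_restrE)
  have "sys_events A1" "sys_events A2"
    using A1(1) A2(1) unfolding exec_iff_local_exec by blast+
  moreover have "restr chan A1 (LC \<inter> RC) = restr chan A2 (LC \<inter> RC)"
    using assms(6) left_Int_right_eq_Ccut0[OF assms(3)]
    unfolding A1(2) A2(2) restr_restr LC_def RC_def by simp
  ultimately obtain A where A: "sys_events A" "restr chan A LC = restr chan A1 LC"
      "restr chan A RC = restr chan A2 RC"
    by (rule common_extension)
  have "local_exec chan msg F2 l A" if "l \<in> LO F2" for l
  proof (cases "l \<in> L0")
    case True
    show ?thesis
      by (rule local_exec_shared_location[OF assms(1,3) True A1(1) A(2)[unfolded LC_def]])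
  next
    case False
    show ?thesis
      by (rule local_exec_unshared_location[OF assms(3) that False A2(1) A(3)[unfolded RC_def]])
  qed
  with A(1) have "A \<in> exec chan msg F2"
    unfolding exec_iff_local_exec by blast
  with A(2,3) show ?thesis
    unfolding A1(2) A2(2) LC_def RC_def by (intro bexI[of _ A]) simp_all
qed

end
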